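(* Let $\mu$ be a stationary ergodic, elliptic and non-degenerate probability measure on $\Omega$ with $\mathbb P^1(S_+)>0$. Let $\epsilon>0$ and let $y\in\mathbb Z_+$ satisfy $\mathbb P^y(S_+)>1-\epsilon$. Then there exist integers $n_1<n_2<\cdots$ such that $\mathbb P^1(Z^-_{n_i}>y)<3\epsilon$ for all $i\ge1$.
   Context: Notation: $\mathbb N=\{1,2,\dots\}$, $\mathbb Z_+=\{0,1,2,\dots\}$. Cookie environments $\omega\in\Omega=[0,1]^{\mathbb Z\times\mathbb N}$; shift $(\theta\omega)(x,n)=\omega(x+1,n)$; $\mu$ stationary ergodic means $\theta$-invariant and ergodic; elliptic means $\mu((0,1)^{\mathbb Z\times\mathbb N})=1$. Random arrow environment: $a(x,n)=\mathbf 1_{\{u(x,n)<\omega(x,n)\}}$ with $u(x,n)$ i.i.d. Uniform$[0,1]$ independent of $\omega\sim\mu$; $\mathbb P$ denotes the joint law of $(\omega,u)$. A sequence $b\in\{0,1\}^{\mathbb N}$ is non-degenerate if $b(i)\ne b(i+1)$ for infinitely many $i$; $\mu$ is non-degenerate if $\mathbb P$-a.s. every $a(x,\cdot)$ is non-degenerate. For non-degenerate $b$: $U^+_b(0)=0$ and for $x\ge1$, $U^+_b(x)$ is the number of indices $i$ with $b(i)=1$ preceding the $x$-th index $j$ with $b(j)=0$; $U^-_b$ is defined the same way with $0$ and $1$ exchanged. For $y\in\mathbb Z_+$: $Z^+_0=y$, $Z^+_n=U^+_{a(n-1,\cdot)}(Z^+_{n-1})$; $Z^-_0=y$, $Z^-_n=U^-_{a(1-n,\cdot)}(Z^-_{n-1})$.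 $\mathbb P^y$ denotes $\mathbb P$ applied to events about $Z^\pm$ with initial value $y$. $S_+=\{Z^+_n>0\ \forall n\ge0\}$. *)

theory Defs
  imports "HOL-Probability.Probability" "HOL-Library.Infinite_Set"
begin

definition Idx :: "(int \<times> nat) set" where
  "Idx = UNIV \<times> {1..}"

definition OmegaM :: "(int \<times> nat \<Rightarrow> real) measure" where
  "OmegaM = PiM Idx (\<lambda>_. restrict_space borel {0..1::real})"

definition UnifM :: "(int \<times> nat \<Rightarrow> real) measure" where
  "UnifM = PiM Idx (\<lambda>_. uniform_measure lborel {0..1::real})"

definition shift :: "(int \<times> nat \<Rightarrow> real) \<Rightarrow> (int \<times> nat \<Rightarrow> real)" where
  "shift \<omega> = (\<lambda>(x, n). \<omega> (x + 1, n))"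

definition stationary :: "(int \<times> nat \<Rightarrow> real) measure \<Rightarrow> bool" where
  "stationary \<mu> \<longleftrightarrow> shift \<in> \<mu> \<rightarrow>\<^sub>M \<mu> \<and> distr \<mu> \<mu> shift = \<mu>"

definition ergodic :: "(int \<times> nat \<Rightarrow> real) measure \<Rightarrow> bool" where
  "ergodic \<mu> \<longleftrightarrow> (\<forall>A \<in> sets \<mu>. shift -` A \<inter> space \<mu> = A \<longrightarrow>
                     emeasure \<mu> A = 0 \<or> emeasure \<mu> A = 1)"

definition elliptic :: "(int \<times> nat \<Rightarrow> real) measure \<Rightarrow> bool" where
  "elliptic \<mu> \<longleftrightarrow> emeasure \<mu> {\<omega> \<in> space \<mu>. \<forall>i \<in> Idx. 0 < \<omega> i \<and> \<omega> i < 1} = 1"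

definition jointP :: "(int \<times> nat \<Rightarrow> real) measure \<Rightarrow> ((int \<times> nat \<Rightarrow> real) \<times> (int \<times> nat \<Rightarrow> real)) measure" where
  "jointP \<mu> = \<mu> \<Otimes>\<^sub>M UnifM"

text \<open>Arrow environment a(x,n) = 1 iff u(x,n) < \<omega>(x,n) (True encodes 1, False encodes 0).\<close>
definition arrow :: "(int \<times> nat \<Rightarrow> real) \<Rightarrow> (int \<times> nat \<Rightarrow> real) \<Rightarrow> int \<Rightarrow> nat \<Rightarrow> bool" where
  "arrow \<omega> u x n \<longleftrightarrow> u (x, n) < \<omega> (x, n)"

text \<open>A sequence b indexed by \<nat> = {1,2,...} (values at index 0 are ignored).\<close>
definition nondeg :: "(nat \<Rightarrow> bool) \<Rightarrow> bool" where
  "nondeg b \<longleftrightarrow> infinite {i. 1 \<le> i \<and> b i \<noteq> b (i + 1)}"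

definition nondegenerate :: "(int \<times> nat \<Rightarrow> real) measure \<Rightarrow> bool" where
  "nondegenerate \<mu> \<longleftrightarrow> (AE p in jointP \<mu>. \<forall>x. nondeg (arrow (fst p) (snd p) x))"

text \<open>The x-th (x \<ge> 1) index j \<ge> 1 with b j = v.\<close>
definition nth_idx :: "(nat \<Rightarrow> bool) \<Rightarrow> bool \<Rightarrow> nat \<Rightarrow> nat" where
  "nth_idx b v x = enumerate {i. 1 \<le> i \<and> b i = v} (x - 1)"

definition Uplus :: "(nat \<Rightarrow> bool) \<Rightarrow> nat \<Rightarrow> nat" where
  "Uplus b x = (if x = 0 then 0 else card {i. 1 \<le> i \<and> i < nth_idx b False x \<and> b i})"

definition Uminus :: "(nat \<Rightarrow> bool) \<Rightarrow> nat \<Rightarrow> nat" where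
  "Uminus b x = (if x = 0 then 0 else card {i. 1 \<le> i \<and> i < nth_idx b True x \<and> \<not> b i})"

primrec Zplus :: "(int \<Rightarrow> nat \<Rightarrow> bool) \<Rightarrow> nat \<Rightarrow> nat \<Rightarrow> nat" where
  "Zplus a y 0 = y"
| "Zplus a y (Suc n) = Uplus (a (int n)) (Zplus a y n)"

primrec Zminus :: "(int \<Rightarrow> nat \<Rightarrow> bool) \<Rightarrow> nat \<Rightarrow> nat \<Rightarrow> nat" where
  "Zminus a y 0 = y"
| "Zminus a y (Suc n) = Uminus (a (1 - int (Suc n))) (Zminus a y n)"

definition PSplus :: "(int \<times> nat \<Rightarrow> real) measure \<Rightarrow> nat \<Rightarrow> real" where
  "PSplus \<mu> y = measure (jointP \<mu>)
     {p \<in> space (jointP \<mu>). \<forall>n. Zplus (arrow (fst p) (snd p)) y n > 0}"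

end

theory Submission
  imports Defs
begin

text \<open>
  Reading the arrows of one column as a sequence of ones and zeros, \<open>U\<^sup>-\<close> and \<open>U\<^sup>+\<close> are
  dual: \<open>U\<^sup>-\<^sub>b(k) > y\<close> says that the \<open>(y+1)\<close>-th zero precedes the \<open>k\<close>-th one, i.e.
  \<open>U\<^sup>+\<^sub>b(y+1) < k\<close>. Iterating this along the columns \<open>0, -1, \<dots>, 1 - n\<close>, and using that
  \<open>U\<^sup>+\<close> is monotone, \<open>Z\<^sup>-\<^sub>n > y\<close> started at 1 forces the forward chain \<open>Z\<^sup>+\<close> started at \<open>y\<close>
  in column \<open>1 - n\<close> to reach 0 within \<open>n\<close> steps. The law \<open>\<P>\<close> is invariant under shifting
  both \<open>\<omega>\<close> and \<open>u\<close>, so this has probability at most \<open>1 - \<P>\<^sup>y(S\<^sub>+) < \<epsilon>\<close> for every \<open>n\<close>,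
  and the whole sequence \<open>n\<^sub>i = i\<close> will do.
\<close>

lemma card_less_enumerate:
  fixes S :: "nat set"
  assumes S: "infinite S"
  shows "card {s \<in> S. s < enumerate S n} = n"
proof -
  have "{s \<in> S. s < enumerate S n} = enumerate S ` {..<n}"
  proof
    show "{s \<in> S. s < enumerate S n} \<subseteq> enumerate S ` {..<n}"
    proof
      fix s assume "s \<in> {s \<in> S. s < enumerate S n}"
      then obtain m where m: "enumerate S m = s" "s < enumerate S n"
        using enumerate_Ex[OF S] by blast
      then have "m < n" using S by (metis enumerate_mono_iff)
      then show "s \<in> enumerate S ` {..<n}" using m by auto
    qed
  qed (auto simp: S enumerate_in_set)
  moreover have "inj_on (enumerate S) {..<n}"
    using inj_enumerate[OF S] by (auto simp: inj_on_def)
  ultimately show ?thesis by (simp add: card_image)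
qed

lemma enumerate_less_iff_less_card:
  fixes S :: "nat set"
  assumes S: "infinite S"
  shows "enumerate S n < t \<longleftrightarrow> n < card {s \<in> S. s < t}"
proof
  assume less: "enumerate S n < t"
  have "insert (enumerate S n) {s \<in> S. s < enumerate S n} \<subseteq> {s \<in> S. s < t}"
    using less S enumerate_in_set by auto
  then have "card (insert (enumerate S n) {s \<in> S. s < enumerate S n}) \<le> card {s \<in> S. s < t}"
    by (intro card_mono) auto
  then show "n < card {s \<in> S. s < t}" by (simp add: card_less_enumerate[OF S])
next
  assume n: "n < card {s \<in> S. s < t}"
  show "enumerate S n < t"
  proof (rule ccontr)
    assume "\<not> enumerate S n < t"
    then have "card {s \<in> S. s < t} \<le> card {s \<in> S. s < enumerate S n}"
      by (intro card_mono) auto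
    with n show False by (simp add: card_less_enumerate[OF S])
  qed
qed

lemma nondeg_infinite_level_set:
  assumes "nondeg b"
  shows "infinite {i. 1 \<le> i \<and> b i = v}"
proof
  assume "finite {i. 1 \<le> i \<and> b i = v}"
  then obtain M where M: "\<And>i. 1 \<le> i \<Longrightarrow> b i = v \<Longrightarrow> i \<le> M"
    by (auto simp: finite_nat_set_iff_bounded_le)
  have "{i. 1 \<le> i \<and> b i \<noteq> b (i + 1)} \<subseteq> {..M}"
  proof
    fix i assume "i \<in> {i. 1 \<le> i \<and> b i \<noteq> b (i + 1)}"
    then have "1 \<le> i" "b i = v \<or> b (i + 1) = v" by auto
    then show "i \<in> {..M}" using M[of i] M[of "i + 1"] by auto
  qed
  with assms show False
    unfolding nondeg_def by (meson finite_atMost finite_subset)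
qed

lemma Uminus_gt_iff_Uplus_less:
  assumes b: "nondeg b" and k: "1 \<le> k"
  shows "y < Uminus b k \<longleftrightarrow> Uplus b (Suc y) < k"
proof -
  let ?ones = "{i. 1 \<le> i \<and> b i = True}" and ?zeros = "{i. 1 \<le> i \<and> b i = False}"
  have ones: "infinite ?ones" and zeros: "infinite ?zeros"
    using nondeg_infinite_level_set[OF b] by blast+
  define t1 where "t1 = nth_idx b True k"
  define t0 where "t0 = nth_idx b False (Suc y)"
  have "t1 \<in> ?ones" "t0 \<in> ?zeros"
    using enumerate_in_set[OF ones] enumerate_in_set[OF zeros]
    by (simp_all add: t0_def t1_def nth_idx_def)
  then have "t0 \<noteq> t1" by auto
  have Uminus: "Uminus b k = card {s \<in> ?zeros. s < t1}"
    using k by (simp add: Uminus_def t1_def) (metis (lifting) conj_commute)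
  have Uplus: "Uplus b (Suc y) = card {s \<in> ?ones. s < t0}"
    by (simp add: Uplus_def t0_def) (metis (lifting) conj_commute)
  have "y < Uminus b k \<longleftrightarrow> t0 < t1"
    unfolding Uminus enumerate_less_iff_less_card[OF zeros, symmetric]
    by (simp add: t0_def nth_idx_def)
  also have "\<dots> \<longleftrightarrow> \<not> t1 < t0" using \<open>t0 \<noteq> t1\<close> by auto
  also have "\<dots> \<longleftrightarrow> Uplus b (Suc y) < k"
    unfolding Uplus t1_def nth_idx_def enumerate_less_iff_less_card[OF ones] using k by auto
  finally show ?thesis .
qed

lemma Uplus_mono:
  assumes b: "nondeg b" and "x \<le> x'"
  shows "Uplus b x \<le> Uplus b x'"
proof (cases "x = 0")
  case True
  then show ?thesis by (simp add: Uplus_def)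
next
  case False
  have "nth_idx b False x \<le> nth_idx b False x'"
    using nondeg_infinite_level_set[OF b, of False] \<open>x \<le> x'\<close> by (simp add: nth_idx_def)
  then have "card {i. 1 \<le> i \<and> i < nth_idx b False x \<and> b i}
      \<le> card {i. 1 \<le> i \<and> i < nth_idx b False x' \<and> b i}"
    by (intro card_mono) auto
  with False \<open>x \<le> x'\<close> show ?thesis by (simp add: Uplus_def)
qed

lemma Zplus_mono:
  assumes "\<And>x. nondeg (a x)" and "y \<le> y'"
  shows "Zplus a y n \<le> Zplus a y' n"
  using assms by (induction n) (auto intro: Uplus_mono)

lemma Zplus_Suc_shift:
  "Zplus a y (Suc n) = Zplus (\<lambda>x. a (x + 1)) (Uplus (a 0) y) n"
  by (induction n) (auto simp: add.commute)

lemma Zminus_gt_imp_Zplus_less: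
  assumes a: "\<And>x. nondeg (a x)"
  shows "y < Zminus a k n \<Longrightarrow> Zplus (\<lambda>x. a (x + 1 - int n)) y n < k"
proof (induction n arbitrary: y)
  case 0
  then show ?case by simp
next
  case (Suc n)
  let ?m = "Zminus a k n" and ?b = "a (- int n)" and ?a' = "\<lambda>x. a (x + 1 - int n)"
  have y: "y < Uminus ?b ?m" using Suc.prems by simp
  then have "1 \<le> ?m" by (cases "?m = 0") (auto simp: Uminus_def)
  with y have "Uplus ?b (Suc y) < ?m" using Uminus_gt_iff_Uplus_less[OF a] by blast
  then have IH: "Zplus ?a' (Uplus ?b (Suc y)) n < k" using Suc.IH by simp
  have "Zplus (\<lambda>x. a (x + 1 - int (Suc n))) y (Suc n) = Zplus ?a' (Uplus ?b y) n"
    by (subst Zplus_Suc_shift) (simp add: algebra_simps)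
  also have "\<dots> \<le> Zplus ?a' (Uplus ?b (Suc y)) n"
    using a by (intro Zplus_mono Uplus_mono) auto
  finally show ?case using IH by simp
qed

definition shift_back :: "(int \<times> nat \<Rightarrow> 'a) \<Rightarrow> int \<times> nat \<Rightarrow> 'a" where
  "shift_back \<omega> = (\<lambda>(x, n). \<omega> (x - 1, n))"

lemma funpow_shift_back: "(shift_back ^^ m) \<omega> = (\<lambda>(x, n). \<omega> (x - int m, n))"
  by (induction m) (auto simp: shift_back_def algebra_simps)

lemma arrow_funpow_shift_back:
  "arrow ((shift_back ^^ m) \<omega>) ((shift_back ^^ m) u) x = arrow \<omega> u (x - int m)"
  by (simp add: funpow_shift_back arrow_def fun_eq_iff)

lemma Zminus_gt_imp_Zplus_extinct:
  assumes "\<And>x. nondeg (arrow \<omega> u x)" and "y < Zminus (arrow \<omega> u) 1 n"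
  shows "Zplus (arrow ((shift_back ^^ (n - 1)) \<omega>) ((shift_back ^^ (n - 1)) u)) y n = 0"
proof (cases "n = 0")
  case True
  with assms(2) show ?thesis by simp
next
  case False
  then have "arrow ((shift_back ^^ (n - 1)) \<omega>) ((shift_back ^^ (n - 1)) u)
      = (\<lambda>x. arrow \<omega> u (x + 1 - int n))"
    by (auto simp: arrow_funpow_shift_back of_nat_diff algebra_simps)
  with Zminus_gt_imp_Zplus_less[of "arrow \<omega> u", OF assms] show ?thesis by simp
qed

lemma measurable_shift_back_PiM: "shift_back \<in> PiM Idx (\<lambda>_. F) \<rightarrow>\<^sub>M PiM Idx (\<lambda>_. F)"
proof -
  have "shift_back = (\<lambda>\<omega> i. \<omega> (fst i - 1, snd i))"
    by (auto simp: shift_back_def fun_eq_iff)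
  also have "\<dots> \<in> PiM Idx (\<lambda>_. F) \<rightarrow>\<^sub>M PiM Idx (\<lambda>_. F)"
  proof (rule measurable_PiM_single')
    fix i :: "int \<times> nat" assume "i \<in> Idx"
    then have "(fst i - 1, snd i) \<in> Idx" by (auto simp: Idx_def)
    then show "(\<lambda>\<omega>. \<omega> (fst i - 1, snd i)) \<in> PiM Idx (\<lambda>_. F) \<rightarrow>\<^sub>M F"
      by (rule measurable_component_singleton)
  qed (auto simp: space_PiM PiE_iff Idx_def extensional_def)
  finally show ?thesis .
qed

lemma distr_shift_back_PiM:
  assumes "prob_space F"
  shows "distr (PiM Idx (\<lambda>_. F)) (PiM Idx (\<lambda>_. F)) shift_back = PiM Idx (\<lambda>_. F)"
proof -
  let ?f = "\<lambda>i :: int \<times> nat. (fst i - 1, snd i)"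
  have "distr (PiM Idx (\<lambda>_. F)) (PiM Idx (\<lambda>_. F)) shift_back
      = distr (PiM Idx (\<lambda>_. F)) (PiM Idx (\<lambda>_. F)) (\<lambda>\<omega>. \<lambda>i\<in>Idx. \<omega> (?f i))"
    by (rule distr_cong)
      (auto simp: space_PiM shift_back_def PiE_iff Idx_def extensional_def)
  also have "\<dots> = PiM Idx (\<lambda>_. F)"
  proof -
    have "inj_on ?f Idx" "?f \<in> Idx \<rightarrow> Idx" by (auto simp: inj_on_def Idx_def)
    from distr_PiM_reindex[OF assms this] show ?thesis by simp
  qed
  finally show ?thesis .
qed

lemma distr_left_inverse:
  assumes f: "f \<in> M \<rightarrow>\<^sub>M M" and "distr M M f = M"
    and g: "g \<in> M \<rightarrow>\<^sub>M M" and "\<And>x. x \<in> space M \<Longrightarrow> g (f x) = x"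
  shows "distr M M g = M"
proof -
  have "distr M M g = distr (distr M M f) M g" using assms(2) by simp
  also have "\<dots> = distr M M (g \<circ> f)" by (rule distr_distr[OF g f])
  also have "\<dots> = distr M M (\<lambda>x. x)" using assms(4) by (intro distr_cong) auto
  finally show ?thesis by (simp add: distr_id[unfolded id_def])
qed

lemma measurable_funpow: "T \<in> M \<rightarrow>\<^sub>M M \<Longrightarrow> (T ^^ m) \<in> M \<rightarrow>\<^sub>M M"
  by (induction m) (auto simp: funpow_Suc_right)

lemma distr_funpow:
  assumes T: "T \<in> M \<rightarrow>\<^sub>M M" and "distr M M T = M"
  shows "distr M M (T ^^ m) = M"
proof (induction m)
  case 0
  then show ?case by (simp add: distr_id[unfolded id_def])
next
  case (Suc m)
  have "distr M M (T ^^ Suc m) = distr (distr M M T) M (T ^^ m)"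
    by (simp only: distr_distr[OF measurable_funpow[OF T] T] funpow_Suc_right)
  with Suc.IH assms(2) show ?case by (simp only:)
qed

lemma prob_space_UnifM: "prob_space UnifM"
  unfolding UnifM_def by (auto intro!: prob_space_PiM prob_space_uniform_measure)

lemma stationary_shift_back:
  assumes "sets \<mu> = sets OmegaM" and "stationary \<mu>"
  shows "shift_back \<in> \<mu> \<rightarrow>\<^sub>M \<mu>" and "distr \<mu> \<mu> shift_back = \<mu>"
proof -
  show sb: "shift_back \<in> \<mu> \<rightarrow>\<^sub>M \<mu>"
    using measurable_shift_back_PiM
    by (simp add: measurable_cong_sets[OF assms(1) assms(1)] OmegaM_def)
  from assms(2) have "shift \<in> \<mu> \<rightarrow>\<^sub>M \<mu>" and "distr \<mu> \<mu> shift = \<mu>"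
    by (auto simp: stationary_def)
  then show "distr \<mu> \<mu> shift_back = \<mu>"
    by (rule distr_left_inverse[OF _ _ sb]) (simp add: shift_back_def shift_def)
qed

lemma jointP_shift_back_invariant:
  assumes "prob_space \<mu>" and "sets \<mu> = sets OmegaM" and "stationary \<mu>"
  shows "map_prod (shift_back ^^ m) (shift_back ^^ m) \<in> jointP \<mu> \<rightarrow>\<^sub>M jointP \<mu>"
    and "distr (jointP \<mu>) (jointP \<mu>) (map_prod (shift_back ^^ m) (shift_back ^^ m)) = jointP \<mu>"
proof -
  note \<mu> = stationary_shift_back[OF assms(2,3)]
  have U: "shift_back \<in> UnifM \<rightarrow>\<^sub>M UnifM" "distr UnifM UnifM shift_back = UnifM"
    unfolding UnifM_def
    by (auto intro!: measurable_shift_back_PiM distr_shift_back_PiM prob_space_uniform_measure)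
  have \<mu>_m: "(shift_back ^^ m) \<in> \<mu> \<rightarrow>\<^sub>M \<mu>" "distr \<mu> \<mu> (shift_back ^^ m) = \<mu>"
    using measurable_funpow[OF \<mu>(1)] distr_funpow[OF \<mu>] by auto
  have U_m: "(shift_back ^^ m) \<in> UnifM \<rightarrow>\<^sub>M UnifM" "distr UnifM UnifM (shift_back ^^ m) = UnifM"
    using measurable_funpow[OF U(1)] distr_funpow[OF U] by auto
  show "map_prod (shift_back ^^ m) (shift_back ^^ m) \<in> jointP \<mu> \<rightarrow>\<^sub>M jointP \<mu>"
    unfolding jointP_def using \<mu>_m(1) U_m(1) by (simp add: map_prod_def)
  have "sigma_finite_measure (distr UnifM UnifM (shift_back ^^ m))"
    using U_m(2) prob_space_UnifM by (simp add: prob_space_imp_sigma_finite)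
  from pair_measure_distr[OF \<mu>_m(1) U_m(1) this]
  show "distr (jointP \<mu>) (jointP \<mu>) (map_prod (shift_back ^^ m) (shift_back ^^ m)) = jointP \<mu>"
    using \<mu>_m(2) U_m(2) by (simp add: jointP_def map_prod_def)
qed

lemma measure_Zminus_gt_le:
  assumes "prob_space \<mu>" and "sets \<mu> = sets OmegaM" and "stationary \<mu>" and "nondegenerate \<mu>"
  shows "measure (jointP \<mu>) {p \<in> space (jointP \<mu>). y < Zminus (arrow (fst p) (snd p)) 1 n}
           \<le> 1 - PSplus \<mu> y"
proof -
  define J where "J = jointP \<mu>"
  interpret J: prob_space J
    unfolding J_def jointP_def by (rule prob_space_pair[OF assms(1) prob_space_UnifM])
  define A where "A = {p \<in> space J. y < Zminus (arrow (fst p) (snd p)) 1 n}"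
  define S where "S = {p \<in> space J. \<forall>m. 0 < Zplus (arrow (fst p) (snd p)) y m}"
  define T :: "(int \<times> nat \<Rightarrow> real) \<times> (int \<times> nat \<Rightarrow> real) \<Rightarrow> _"
    where "T = map_prod (shift_back ^^ (n - 1)) (shift_back ^^ (n - 1))"
  have T: "T \<in> J \<rightarrow>\<^sub>M J" "distr J J T = J"
    unfolding T_def J_def using jointP_shift_back_invariant[OF assms(1-3)] by auto
  obtain N where N: "{p \<in> space J. \<not> (\<forall>x. nondeg (arrow (fst p) (snd p) x))} \<subseteq> N"
    "N \<in> sets J" "emeasure J N = 0"
    using assms(4) unfolding nondegenerate_def J_def[symmetric] by (rule AE_E)
  have A_sub: "A \<subseteq> (T -` (space J - S) \<inter> space J) \<union> N"
  proof
    fix p assume "p \<in> A"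
    show "p \<in> (T -` (space J - S) \<inter> space J) \<union> N"
    proof (cases "p \<in> N")
      case False
      with \<open>p \<in> A\<close> N(1) have "p \<in> space J" and "\<And>x. nondeg (arrow (fst p) (snd p) x)"
        and "y < Zminus (arrow (fst p) (snd p)) 1 n" by (auto simp: A_def)
      then have "Zplus (arrow (fst (T p)) (snd (T p))) y n = 0"
        using Zminus_gt_imp_Zplus_extinct by (simp add: T_def)
      then have "T p \<notin> S" by (auto simp: S_def)
      with \<open>p \<in> space J\<close> measurable_space[OF T(1)] show ?thesis by auto
    qed simp
  qed
  show ?thesis
  proof (cases "S \<in> sets J")
    case True
    have "measure J A \<le> measure J (T -` (space J - S) \<inter> space J) + measure J N"
      using A_sub N(2) True T(1)
      by (intro order.trans[OF J.finite_measure_mono measure_Un_le]) auto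
    also have "\<dots> = measure J (space J - S)"
      using N(3) True measure_distr[OF T(1), of "space J - S"] T(2) by (simp add: measure_def)
    also have "\<dots> = 1 - PSplus \<mu> y"
      using J.prob_compl[OF True] by (simp add: PSplus_def S_def J_def)
    finally show ?thesis by (simp add: A_def J_def)
  next
    case False
    then have "PSplus \<mu> y = 0"
      by (simp add: PSplus_def S_def J_def measure_notin_sets)
    with J.prob_le_1 show ?thesis by (simp add: A_def J_def)
  qed
qed

theorem lemma4p7:
  fixes \<mu> :: "(int \<times> nat \<Rightarrow> real) measure" and \<epsilon> :: real and y :: nat
  assumes "prob_space \<mu>" and "sets \<mu> = sets OmegaM"
    and "stationary \<mu>" and "ergodic \<mu>" and "elliptic \<mu>" and "nondegenerate \<mu>"
    and "PSplus \<mu> 1 > 0"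
    and "\<epsilon> > 0" and "PSplus \<mu> y > 1 - \<epsilon>"
  shows "\<exists>n :: nat \<Rightarrow> nat. strict_mono n \<and>
           (\<forall>i. measure (jointP \<mu>)
                  {p \<in> space (jointP \<mu>). Zminus (arrow (fst p) (snd p)) 1 (n i) > y} < 3 * \<epsilon>)"
proof (intro exI conjI allI)
  show "strict_mono (id :: nat \<Rightarrow> nat)" by (simp add: strict_mono_def)
  fix i
  have "measure (jointP \<mu>) {p \<in> space (jointP \<mu>). y < Zminus (arrow (fst p) (snd p)) 1 (id i)}
      \<le> 1 - PSplus \<mu> y"
    by (rule measure_Zminus_gt_le[OF assms(1-3,6)])
  also have "\<dots> < 3 * \<epsilon>" using assms(8,9) by simp
  finally show "measure (jointP \<mu>)
      {p \<in> space (jointP \<mu>). y < Zminus (arrow (fst p) (snd p)) 1 (id i)} < 3 * \<epsilon>" .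
qed

end
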